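(* Let $p\equiv1\pmod4$ be a prime. Let $S\subset\mathbb{P}^5$ be the surface over $\mathbb{F}_p$ defined by $x_1^2-x_2^2=x_3^2$, $x_0^2-x_1^2=x_4^2$, $x_0^2-x_2^2=x_5^2$, and let $X\subset\mathbb{A}^3$ be the affine surface over $\mathbb{F}_p$ given by $z^2=(x^2y^2+1)(x^2+y^2)$. Then $$|S(\mathbb{F}_p)|=|X(\mathbb{F}_p)|-1.$$ *)

theory Defs
  imports "HOL-Number_Theory.Number_Theory"
begin

text \<open>The prime field F_p is modelled by the residues {0..p-1} with arithmetic mod p.\<close>

definition Fp :: "nat \<Rightarrow> int set" where
  "Fp p = {0..<int p}"

definition X_points :: "nat \<Rightarrow> (int \<times> int \<times> int) set" where
  "X_points p = {(x, y, z). x \<in> Fp p \<and> y \<in> Fp p \<and> z \<in> Fp p \<and>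
      [z^2 = (x^2 * y^2 + 1) * (x^2 + y^2)] (mod int p)}"

text \<open>A point of P^5(F_p) is the class of a nonzero vector in F_p^6 under scaling
  by nonzero scalars; vectors are lists of length 6 with entries in F_p.\<close>
definition scale_vec :: "nat \<Rightarrow> int \<Rightarrow> int list \<Rightarrow> int list" where
  "scale_vec p c v = map (\<lambda>a. (c * a) mod int p) v"

definition proj_class :: "nat \<Rightarrow> int list \<Rightarrow> int list set" where
  "proj_class p v = {scale_vec p c v | c. c \<in> Fp p \<and> c \<noteq> 0}"

definition S_affine_cone :: "nat \<Rightarrow> int list set" where
  "S_affine_cone p = {v. length v = 6 \<and> set v \<subseteq> Fp p \<and> v \<noteq> replicate 6 0 \<and>
      [v!1^2 - v!2^2 = v!3^2] (mod int p) \<and>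
      [v!0^2 - v!1^2 = v!4^2] (mod int p) \<and>
      [v!0^2 - v!2^2 = v!5^2] (mod int p)}"

definition S_points :: "nat \<Rightarrow> int list set set" where
  "S_points p = proj_class p ` S_affine_cone p"

end

theory Submission
  imports Defs
begin

text \<open>
  Let rho(m) be the number of square roots of m in F_p. Counting fibrewise over (x0, x1, x2),
  the affine cone over S, origin included, has
  \<Sum> rho(x1^2 - x2^2) rho(x0^2 - x1^2) rho(x0^2 - x2^2) points, and X has
  \<Sum> rho((x^2 y^2 + 1)(x^2 + y^2)) points. Scaling reduces the cone sum to the slices
  x0 = 1, (x0, x1) = (0, 1) and (x0, x1) = (0, 0). On the slice x0 = 1 the weights
  rho(1 - a^2) rho(1 - b^2) turn the sum over (a, b) into a sum over pairs of points of the
  circle a^2 + d^2 = 1. Since p = 1 mod 4 there is an i with i^2 = -1, and s = a + i d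
  parametrises the circle by the nonzero residues, with a = (s + 1/s)/2. Then a^2 - b^2 is
  (s^2 - t^2)(s^2 t^2 - 1) up to the square factor (2 s t)^2, and the substitution t := i t turns
  this into -(s^2 t^2 + 1)(s^2 + t^2): the slice x0 = 1 counts exactly the points of X with
  x y \<noteq> 0. The other slices and the axes of X contribute 4(p - 1) + 4(p - 1)(p - 2) and
  4(p - 1), and dividing by the p - 1 points of a projective class gives |S| = |X| - 1.
\<close>

section \<open>Residues modulo a prime\<close>

locale prime_field =
  fixes p :: nat
  assumes prime_p: "prime p"
begin

lemma prime_int_p: "prime (int p)"
  using prime_p by simp

lemma p_gt_1: "p > 1"
  using prime_p prime_gt_1_nat by blast

lemma mem_Fp_iff: "x \<in> Fp p \<longleftrightarrow> 0 \<le> x \<and> x < int p"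
  by (simp add: Fp_def)

lemma finite_Fp [simp]: "finite (Fp p)"
  by (simp add: Fp_def)

lemma card_Fp: "card (Fp p) = p"
  by (simp add: Fp_def)

lemma zero_in_Fp [simp]: "0 \<in> Fp p"
  using p_gt_1 by (simp add: mem_Fp_iff)

lemma one_in_Fp_nonzero [simp]: "1 \<in> Fp p - {0}"
  using p_gt_1 by (simp add: mem_Fp_iff)

lemma card_Fp_nonzero: "card (Fp p - {0}) = p - 1"
  by (simp add: card_Fp)

lemma mod_in_Fp [simp]: "x mod int p \<in> Fp p"
  using p_gt_1 by (simp add: mem_Fp_iff)

lemma mod_Fp_eq [simp]: "x \<in> Fp p \<Longrightarrow> x mod int p = x"
  by (simp add: mem_Fp_iff)

lemma Fp_cong_imp_eq: "x \<in> Fp p \<Longrightarrow> y \<in> Fp p \<Longrightarrow> [x = y] (mod int p) \<Longrightarrow> x = y"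
  using cong_less_imp_eq_int by (auto simp: mem_Fp_iff)

lemma Fp_nonzero_iff: "x \<in> Fp p - {0} \<longleftrightarrow> x \<in> Fp p \<and> \<not> int p dvd x"
  by (auto simp: mem_Fp_iff zdvd_not_zless)

lemma Fp_nonzero_not_dvd: "x \<in> Fp p - {0} \<Longrightarrow> \<not> int p dvd x"
  using Fp_nonzero_iff by blast

lemma sum_Fp_remove_zero: "(\<Sum>x\<in>Fp p. f x) = f 0 + (\<Sum>x\<in>Fp p - {0}. f x)"
  by (rule sum.remove) simp_all

lemma not_dvd_mult: "\<not> int p dvd a \<Longrightarrow> \<not> int p dvd b \<Longrightarrow> \<not> int p dvd a * b"
  using prime_dvd_mult_iff[OF prime_int_p] by blast

lemma cong_mult_cancel_left:
  "\<not> int p dvd c \<Longrightarrow> [c * x = c * y] (mod int p) \<Longrightarrow> [x = y] (mod int p)"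
  using cong_mult_lcancel prime_imp_coprime[OF prime_int_p] by (blast intro: coprime_commute [THEN iffD1])

lemma inverse_mod_exists:
  assumes "\<not> int p dvd c"
  obtains c' where "c' \<in> Fp p - {0}" "[c * c' = 1] (mod int p)"
proof -
  obtain c' where c': "[c * c' = 1] (mod int p)"
    using cong_solve_coprime_int prime_imp_coprime[OF prime_int_p] assms
    by (metis coprime_commute)
  then have inv: "[c * (c' mod int p) = 1] (mod int p)"
    by (metis cong_def mod_mult_right_eq)
  have "c' mod int p \<noteq> 0"
  proof
    assume "c' mod int p = 0"
    then have "[c * (c' mod int p) = 0] (mod int p)"
      by (simp add: cong_0_iff)
    with inv have "int p dvd 1"
      by (metis cong_0_iff cong_sym cong_trans)
    then show False
      using p_gt_1 by simp
  qed
  with inv show thesis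
    by (intro that) simp_all
qed

lemma bij_betw_mult_Fp:
  assumes "\<not> int p dvd c"
  shows "bij_betw (\<lambda>x. (c * x) mod int p) (Fp p) (Fp p)"
proof -
  have inj: "inj_on (\<lambda>x. (c * x) mod int p) (Fp p)"
  proof (rule inj_onI)
    fix x y assume xy: "x \<in> Fp p" "y \<in> Fp p" and "(c * x) mod int p = (c * y) mod int p"
    then have "[x = y] (mod int p)"
      using cong_mult_cancel_left[OF assms] unfolding cong_def by blast
    with xy show "x = y"
      by (rule Fp_cong_imp_eq)
  qed
  have "(\<lambda>x. (c * x) mod int p) ` Fp p \<subseteq> Fp p"
    by (simp add: image_subset_iff)
  with inj show ?thesis
    unfolding bij_betw_def using endo_inj_surj[OF finite_Fp] by simp
qed

lemma bij_betw_mult_Fp_nonzero: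
  assumes "\<not> int p dvd c"
  shows "bij_betw (\<lambda>x. (c * x) mod int p) (Fp p - {0}) (Fp p - {0})"
  by (rule bij_betw_DiffI[OF bij_betw_mult_Fp[OF assms]]) auto

lemma sum_Fp_mult_reindex:
  "\<not> int p dvd c \<Longrightarrow> (\<Sum>x\<in>Fp p. f x) = (\<Sum>x\<in>Fp p. f ((c * x) mod int p))"
  by (rule sum.reindex_bij_betw[symmetric], rule bij_betw_mult_Fp)

lemma sum_Fp_nonzero_mult_reindex:
  "\<not> int p dvd c \<Longrightarrow>
    (\<Sum>x\<in>Fp p - {0}. f x) = (\<Sum>x\<in>Fp p - {0}. f ((c * x) mod int p))"
  by (rule sum.reindex_bij_betw[symmetric], rule bij_betw_mult_Fp_nonzero)

lemma mult_mod_in_Fp_nonzero: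
  assumes "c \<in> Fp p - {0}" and "d \<in> Fp p - {0}"
  shows "(c * d) mod int p \<in> Fp p - {0}"
proof -
  have "\<not> int p dvd c"
    using assms(1) Fp_nonzero_iff by blast
  from bij_betwE[OF bij_betw_mult_Fp_nonzero[OF this]] assms(2) show ?thesis
    by (rule bspec)
qed

end

locale odd_prime_field = prime_field +
  assumes odd_p: "odd p"
begin

lemma p_ge_3: "p \<ge> 3"
  using p_gt_1 odd_p by presburger

lemma two_not_dvd: "\<not> int p dvd 2"
proof
  assume "int p dvd 2"
  then have "p \<le> 2"
    using zdvd_imp_le by fastforce
  with p_ge_3 show False
    by simp
qed

end

locale prime_field_sqrt_minus_one = odd_prime_field +
  fixes i :: int
  assumes i_square: "[i^2 = -1] (mod int p)"
begin

lemma i_not_dvd: "\<not> int p dvd i"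
proof
  assume "int p dvd i"
  then have "[i^2 = 0] (mod int p)"
    by (simp add: cong_0_iff power2_eq_square)
  with i_square have "[-1 = 0] (mod int p)"
    by (metis cong_sym cong_trans)
  then show False
    using p_gt_1 by (simp add: cong_0_iff)
qed

end

lemma sqrt_minus_one_exists:
  fixes p :: nat
  assumes p: "prime p" and p_mod_4: "p mod 4 = 1"
  shows "\<exists>i. [i^2 = -1] (mod int p)"
proof -
  have "p > 2"
    using p_mod_4 prime_gt_1_nat[OF p] by presburger
  then have "[Legendre (-1) (int p) = (-1) ^ ((p - 1) div 2)] (mod int p)"
    using euler_criterion[OF p] by simp
  moreover have "even ((p - 1) div 2)"
    using p_mod_4 by presburger
  ultimately have "[Legendre (-1) (int p) = 1] (mod int p)"
    by simp
  moreover have "\<not> [0 = 1] (mod int p)" and "\<not> [-1 = 1] (mod int p)"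
    using \<open>p > 2\<close> by (auto simp: cong_iff_dvd_diff zdvd_not_zless dest: zdvd_imp_le)
  ultimately have "QuadRes (int p) (-1)"
    unfolding Legendre_def by (auto split: if_splits)
  then show ?thesis
    by (simp add: QuadRes_def)
qed

section \<open>Counting square roots\<close>

definition sqrts :: "nat \<Rightarrow> int \<Rightarrow> int set" where
  "sqrts p m = {z \<in> Fp p. [z^2 = m] (mod int p)}"

definition num_sqrts :: "nat \<Rightarrow> int \<Rightarrow> nat" where
  "num_sqrts p m = card (sqrts p m)"

context prime_field
begin

lemma sqrts_subset_Fp: "sqrts p m \<subseteq> Fp p"
  by (auto simp: sqrts_def)

lemma finite_sqrts [simp]: "finite (sqrts p m)"
  using finite_subset[OF sqrts_subset_Fp] by simp

lemma num_sqrts_cong: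
  assumes "[m = m'] (mod int p)"
  shows "num_sqrts p m = num_sqrts p m'"
proof -
  have "[z^2 = m] (mod int p) \<longleftrightarrow> [z^2 = m'] (mod int p)" for z
    using assms by (meson cong_sym cong_trans)
  then show ?thesis
    by (simp add: num_sqrts_def sqrts_def)
qed

lemma num_sqrts_le_mult_square:
  assumes "\<not> int p dvd w"
  shows "num_sqrts p m \<le> num_sqrts p (w^2 * m)"
  unfolding num_sqrts_def
proof (rule card_inj_on_le)
  show "inj_on (\<lambda>z. (w * z) mod int p) (sqrts p m)"
    using bij_betw_mult_Fp[OF assms] by (rule bij_betw_imp_inj_on [THEN inj_on_subset]) (simp add: sqrts_def)
  show "(\<lambda>z. (w * z) mod int p) ` sqrts p m \<subseteq> sqrts p (w^2 * m)"
  proof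
    fix y assume "y \<in> (\<lambda>z. (w * z) mod int p) ` sqrts p m"
    then obtain z where z: "[z^2 = m] (mod int p)" and y: "y = (w * z) mod int p"
      by (auto simp: sqrts_def)
    have "[y^2 = (w * z)^2] (mod int p)"
      unfolding y by (intro cong_pow) simp
    also have "(w * z)^2 = w^2 * z^2"
      by (simp add: power_mult_distrib)
    also have "[w^2 * z^2 = w^2 * m] (mod int p)"
      using z by (intro cong_mult cong_refl)
    finally show "y \<in> sqrts p (w^2 * m)"
      by (simp add: sqrts_def y)
  qed
qed simp

lemma num_sqrts_mult_square:
  assumes "\<not> int p dvd w"
  shows "num_sqrts p (w^2 * m) = num_sqrts p m"
proof -
  obtain w' where w': "w' \<in> Fp p - {0}" "[w * w' = 1] (mod int p)"
    using inverse_mod_exists[OF assms] .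
  have "w'^2 * (w^2 * m) = (w * w')^2 * m"
    by (simp add: power_mult_distrib)
  also have "[(w * w')^2 * m = 1^2 * m] (mod int p)"
    using w' by (intro cong_mult cong_pow cong_refl)
  finally have "num_sqrts p (w'^2 * (w^2 * m)) = num_sqrts p m"
    by (metis num_sqrts_cong mult_1 power_one)
  moreover have "num_sqrts p (w^2 * m) \<le> num_sqrts p (w'^2 * (w^2 * m))"
    using num_sqrts_le_mult_square[OF Fp_nonzero_not_dvd[OF w'(1)]] .
  ultimately show ?thesis
    using num_sqrts_le_mult_square[OF assms, of m] by simp
qed

lemma num_sqrts_zero: "num_sqrts p 0 = 1"
proof -
  have "sqrts p 0 = {0}"
  proof (intro equalityI subsetI)
    fix z assume "z \<in> sqrts p 0"
    then have "z \<in> Fp p" "int p dvd z"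
      using prime_dvd_power[OF prime_int_p] by (auto simp: sqrts_def cong_0_iff)
    then show "z \<in> {0}"
      using Fp_nonzero_iff by blast
  qed (simp add: sqrts_def)
  then show ?thesis
    by (simp add: num_sqrts_def)
qed

lemma diff_squares_mult_mod_cong:
  "[((c * a) mod int p)^2 - ((c * b) mod int p)^2 = c^2 * (a^2 - b^2)] (mod int p)"
proof -
  have "[((c * a) mod int p)^2 - ((c * b) mod int p)^2 = (c * a)^2 - (c * b)^2] (mod int p)"
    by (intro cong_diff cong_pow) simp_all
  also have "(c * a)^2 - (c * b)^2 = c^2 * (a^2 - b^2)"
    by (simp add: power_mult_distrib right_diff_distrib)
  finally show ?thesis .
qed

lemma num_sqrts_diff_squares_mult:
  "\<not> int p dvd c \<Longrightarrow>
    num_sqrts p (((c * a) mod int p)^2 - ((c * b) mod int p)^2) = num_sqrts p (a^2 - b^2)"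
  using num_sqrts_cong[OF diff_squares_mult_mod_cong] num_sqrts_mult_square by simp

end

context odd_prime_field
begin

lemma num_sqrts_square:
  assumes b: "\<not> int p dvd b"
  shows "num_sqrts p (b^2) = 2"
proof -
  have "sqrts p (b^2) = {b mod int p, (- b) mod int p}"
  proof (intro equalityI subsetI)
    fix z assume z: "z \<in> sqrts p (b^2)"
    have "z^2 - b^2 = (z - b) * (z - (- b))"
      by (simp add: power2_eq_square algebra_simps)
    with z have "int p dvd (z - b) * (z - (- b))"
      by (simp add: sqrts_def cong_iff_dvd_diff)
    then have "[z = b] (mod int p) \<or> [z = - b] (mod int p)"
      unfolding prime_dvd_mult_iff[OF prime_int_p] cong_iff_dvd_diff .
    then have "[z = b mod int p] (mod int p) \<or> [z = (- b) mod int p] (mod int p)"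
      unfolding cong_mod_right .
    moreover have "z \<in> Fp p"
      using z sqrts_subset_Fp by blast
    ultimately show "z \<in> {b mod int p, (- b) mod int p}"
      using Fp_cong_imp_eq[OF _ mod_in_Fp] by blast
  next
    fix z assume z: "z \<in> {b mod int p, (- b) mod int p}"
    have "[(b mod int p)^2 = b^2] (mod int p)"
      by (intro cong_pow) simp
    moreover have "[((- b) mod int p)^2 = (- b)^2] (mod int p)"
      by (intro cong_pow) simp
    ultimately show "z \<in> sqrts p (b^2)"
      using z by (auto simp: sqrts_def)
  qed
  moreover have "b mod int p \<noteq> (- b) mod int p"
  proof
    assume "b mod int p = (- b) mod int p"
    then have "int p dvd 2 * b"
      by (simp add: mod_eq_dvd_iff)
    with not_dvd_mult[OF two_not_dvd b] show False
      by blast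
  qed
  ultimately show ?thesis
    by (simp add: num_sqrts_def)
qed

lemma num_sqrts_square_Fp_nonzero: "x \<in> Fp p - {0} \<Longrightarrow> num_sqrts p (x^2) = 2"
  using num_sqrts_square Fp_nonzero_not_dvd by blast

end

context prime_field_sqrt_minus_one
begin

lemma num_sqrts_uminus: "num_sqrts p (- m) = num_sqrts p m"
proof -
  have "[i^2 * m = -1 * m] (mod int p)"
    using i_square by (intro cong_mult cong_refl)
  then have "num_sqrts p (i^2 * m) = num_sqrts p (- m)"
    by (simp add: num_sqrts_cong)
  then show ?thesis
    using num_sqrts_mult_square[OF i_not_dvd] by simp
qed

lemma num_sqrts_uminus_square_Fp_nonzero: "x \<in> Fp p - {0} \<Longrightarrow> num_sqrts p (- (x^2)) = 2"
  by (simp add: num_sqrts_uminus num_sqrts_square_Fp_nonzero)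

end

section \<open>Projective classes\<close>

context prime_field
begin

lemma proj_class_eq_image: "proj_class p v = (\<lambda>c. scale_vec p c v) ` (Fp p - {0})"
  by (auto simp: proj_class_def)

lemma length_scale_vec [simp]: "length (scale_vec p c v) = length v"
  by (simp add: scale_vec_def)

lemma nth_scale_vec: "k < length v \<Longrightarrow> scale_vec p c v ! k = (c * v ! k) mod int p"
  by (simp add: scale_vec_def)

lemma set_scale_vec_subset_Fp: "set (scale_vec p c v) \<subseteq> Fp p"
  by (auto simp: scale_vec_def)

lemma scale_vec_scale_vec: "scale_vec p c (scale_vec p d v) = scale_vec p ((c * d) mod int p) v"
  by (simp add: scale_vec_def mod_mult_right_eq mod_mult_left_eq mult.assoc)

lemma scale_vec_one: "set v \<subseteq> Fp p \<Longrightarrow> scale_vec p 1 v = v"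
  unfolding scale_vec_def by (rule map_idI) auto

lemma card_proj_class:
  assumes "set v \<subseteq> Fp p" and "x \<in> set v" and "x \<noteq> 0"
  shows "card (proj_class p v) = p - 1"
proof -
  obtain k where k: "k < length v" "v ! k = x"
    using assms(2) by (auto simp: in_set_conv_nth)
  have x: "\<not> int p dvd x"
    using assms Fp_nonzero_iff by blast
  have "inj_on (\<lambda>c. scale_vec p c v) (Fp p - {0})"
  proof (rule inj_onI)
    fix c d assume cd: "c \<in> Fp p - {0}" "d \<in> Fp p - {0}" and "scale_vec p c v = scale_vec p d v"
    then have "(x * c) mod int p = (x * d) mod int p"
      using arg_cong[of _ _ "\<lambda>w. w ! k"] nth_scale_vec[OF k(1)] k(2) by (metis mult.commute)
    then have "[c = d] (mod int p)"
      using cong_mult_cancel_left[OF x] unfolding cong_def by blast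
    with cd show "c = d"
      by (intro Fp_cong_imp_eq) simp_all
  qed
  then show ?thesis
    by (simp add: proj_class_eq_image card_image card_Fp_nonzero)
qed

lemma proj_class_scale_vec_subset:
  assumes "c \<in> Fp p - {0}"
  shows "proj_class p (scale_vec p c v) \<subseteq> proj_class p v"
proof
  fix w assume "w \<in> proj_class p (scale_vec p c v)"
  then obtain d where d: "d \<in> Fp p - {0}" and w: "w = scale_vec p ((d * c) mod int p) v"
    by (auto simp: proj_class_eq_image scale_vec_scale_vec)
  from mult_mod_in_Fp_nonzero[OF d assms] w show "w \<in> proj_class p v"
    unfolding proj_class_eq_image by (rule rev_image_eqI)
qed

lemma proj_class_eq:
  assumes v: "set v \<subseteq> Fp p" and w: "w \<in> proj_class p v"
  shows "proj_class p w = proj_class p v"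
proof
  obtain c where c: "c \<in> Fp p - {0}" and w_eq: "w = scale_vec p c v"
    using w by (auto simp: proj_class_eq_image)
  then show "proj_class p w \<subseteq> proj_class p v"
    using proj_class_scale_vec_subset by blast
  obtain c' where c': "c' \<in> Fp p - {0}" "[c * c' = 1] (mod int p)"
    using inverse_mod_exists[OF Fp_nonzero_not_dvd[OF c]] .
  have "(c' * c) mod int p = 1"
    using c'(2) p_gt_1 by (simp add: cong_def mult.commute)
  then have "scale_vec p c' w = v"
    using v by (simp add: w_eq scale_vec_scale_vec scale_vec_one)
  then show "proj_class p v \<subseteq> proj_class p w"
    using proj_class_scale_vec_subset[OF c'(1), of w] by simp
qed

lemma proj_class_self: "set v \<subseteq> Fp p \<Longrightarrow> v \<in> proj_class p v"
  unfolding proj_class_eq_image using scale_vec_one one_in_Fp_nonzero by (metis image_eqI)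

lemma proj_class_disjoint:
  assumes "set v \<subseteq> Fp p" and "set v' \<subseteq> Fp p" and "proj_class p v \<noteq> proj_class p v'"
  shows "proj_class p v \<inter> proj_class p v' = {}"
  using assms proj_class_eq by blast

lemma card_proj_class_image:
  assumes "finite A"
    and entries: "\<And>v. v \<in> A \<Longrightarrow> set v \<subseteq> Fp p"
    and nonzero: "\<And>v. v \<in> A \<Longrightarrow> \<exists>x\<in>set v. x \<noteq> 0"
    and scale: "\<And>v c. v \<in> A \<Longrightarrow> c \<in> Fp p - {0} \<Longrightarrow> scale_vec p c v \<in> A"
  shows "(p - 1) * card (proj_class p ` A) = card A"
proof -
  have union: "\<Union> (proj_class p ` A) = A"
    using scale entries proj_class_self by (auto simp: proj_class_eq_image)
  have "(p - 1) * card (proj_class p ` A) = card (\<Union> (proj_class p ` A))"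
  proof (rule card_partition)
    show "finite (proj_class p ` A)" "finite (\<Union> (proj_class p ` A))"
      using assms(1) union by simp_all
    show "card C = p - 1" if "C \<in> proj_class p ` A" for C
      using that entries nonzero card_proj_class by blast
    show "C \<inter> C' = {}" if "C \<in> proj_class p ` A" "C' \<in> proj_class p ` A" "C \<noteq> C'" for C C'
      using that entries proj_class_disjoint by blast
  qed
  with union show ?thesis
    by simp
qed

end

section \<open>Fibrewise point counts\<close>

definition cone_fibre_card :: "nat \<Rightarrow> int \<Rightarrow> int \<Rightarrow> int \<Rightarrow> nat" where
  "cone_fibre_card p x0 x1 x2 =
    num_sqrts p (x1^2 - x2^2) * num_sqrts p (x0^2 - x1^2) * num_sqrts p (x0^2 - x2^2)"

context prime_field
begin

lemma cong_diff_squares_scale: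
  assumes "[a^2 - b^2 = e^2] (mod int p)"
  shows "[((c * a) mod int p)^2 - ((c * b) mod int p)^2 = ((c * e) mod int p)^2] (mod int p)"
proof -
  note diff_squares_mult_mod_cong
  also have "[c^2 * (a^2 - b^2) = c^2 * e^2] (mod int p)"
    using assms by (intro cong_mult cong_refl)
  also have "c^2 * e^2 = (c * e)^2"
    by (simp add: power_mult_distrib)
  also have "[(c * e)^2 = ((c * e) mod int p)^2] (mod int p)"
    by (intro cong_pow) (simp add: cong_sym_eq)
  finally show ?thesis .
qed

lemma S_affine_cone_nonzero_entry:
  assumes "v \<in> S_affine_cone p"
  shows "set v \<subseteq> Fp p" and "\<exists>x\<in>set v. x \<noteq> 0"
  using assms replicate_eqI[of v 6 0] by (auto simp: S_affine_cone_def)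

lemma scale_vec_in_S_affine_cone:
  assumes v: "v \<in> S_affine_cone p" and c: "c \<in> Fp p - {0}"
  shows "scale_vec p c v \<in> S_affine_cone p"
proof -
  obtain x where x: "x \<in> set v" "x \<noteq> 0"
    using S_affine_cone_nonzero_entry[OF v] by blast
  have "x \<in> Fp p - {0}"
    using x S_affine_cone_nonzero_entry(1)[OF v] by blast
  from mult_mod_in_Fp_nonzero[OF c this] have "(c * x) mod int p \<noteq> 0"
    by simp
  moreover have "(c * x) mod int p \<in> set (scale_vec p c v)"
    using x(1) by (simp add: scale_vec_def)
  ultimately have "scale_vec p c v \<noteq> replicate 6 0"
    by auto
  moreover have "length v = 6"
    and "[v!1^2 - v!2^2 = v!3^2] (mod int p)"
    and "[v!0^2 - v!1^2 = v!4^2] (mod int p)"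
    and "[v!0^2 - v!2^2 = v!5^2] (mod int p)"
    using v by (simp_all add: S_affine_cone_def)
  ultimately show ?thesis
    using set_scale_vec_subset_Fp[of c v]
    by (simp add: S_affine_cone_def nth_scale_vec cong_diff_squares_scale)
qed

lemma finite_S_affine_cone: "finite (S_affine_cone p)"
proof -
  have "S_affine_cone p \<subseteq> {v. set v \<subseteq> Fp p \<and> length v = 6}"
    by (auto simp: S_affine_cone_def)
  then show ?thesis
    using finite_lists_length_eq[OF finite_Fp] by (rule finite_subset)
qed

lemma card_S_points: "(p - 1) * card (S_points p) = card (S_affine_cone p)"
  unfolding S_points_def
  using finite_S_affine_cone S_affine_cone_nonzero_entry scale_vec_in_S_affine_cone
  by (rule card_proj_class_image)

lemma card_S_affine_cone:
  "card (S_affine_cone p) + 1 = (\<Sum>x0\<in>Fp p. \<Sum>x1\<in>Fp p. \<Sum>x2\<in>Fp p. cone_fibre_card p x0 x1 x2)"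
proof -
  define T where "T = (SIGMA x0:Fp p. SIGMA x1:Fp p. SIGMA x2:Fp p.
    sqrts p (x1^2 - x2^2) \<times> sqrts p (x0^2 - x1^2) \<times> sqrts p (x0^2 - x2^2))"
  define to_list :: "int \<times> int \<times> int \<times> int \<times> int \<times> int \<Rightarrow> int list"
    where "to_list = (\<lambda>(x0, x1, x2, x3, x4, x5). [x0, x1, x2, x3, x4, x5])"
  have "inj to_list"
    by (rule injI) (auto simp: to_list_def split: prod.splits)
  have "insert (replicate 6 0) (S_affine_cone p) = to_list ` T"
  proof (intro equalityI subsetI)
    fix v assume v: "v \<in> insert (replicate 6 0) (S_affine_cone p)"
    then have "length v = 6"
      by (auto simp: S_affine_cone_def)
    then obtain x0 x1 x2 x3 x4 x5 where v_eq: "v = [x0, x1, x2, x3, x4, x5]"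
      by (auto simp: numeral_eq_Suc length_Suc_conv)
    have "replicate 6 (0::int) = [0, 0, 0, 0, 0, 0]"
      by (simp add: numeral_eq_Suc)
    then have "(x0, x1, x2, x3, x4, x5) \<in> T"
      using v by (auto simp: v_eq T_def sqrts_def S_affine_cone_def cong_sym_eq)
    then show "v \<in> to_list ` T"
      by (rule rev_image_eqI) (simp add: v_eq to_list_def)
  next
    fix v assume "v \<in> to_list ` T"
    then obtain x0 x1 x2 x3 x4 x5 where v: "v = [x0, x1, x2, x3, x4, x5]"
      and "(x0, x1, x2, x3, x4, x5) \<in> T"
      by (auto simp: to_list_def)
    then show "v \<in> insert (replicate 6 0) (S_affine_cone p)"
      by (simp add: T_def sqrts_def S_affine_cone_def cong_sym_eq)
  qed
  moreover have "replicate 6 0 \<notin> S_affine_cone p"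
    by (simp add: S_affine_cone_def)
  ultimately have "card (S_affine_cone p) + 1 = card (to_list ` T)"
    using finite_S_affine_cone by (metis Suc_eq_plus1 card_insert_disjoint)
  also have "\<dots> = card T"
    using \<open>inj to_list\<close> by (simp add: card_image inj_on_subset)
  also have "card T = (\<Sum>x0\<in>Fp p. \<Sum>x1\<in>Fp p. \<Sum>x2\<in>Fp p. cone_fibre_card p x0 x1 x2)"
    by (simp add: T_def card_SigmaI finite_SigmaI card_cartesian_product
        cone_fibre_card_def num_sqrts_def mult.assoc)
  finally show ?thesis .
qed

lemma cone_fibre_card_mult:
  "\<not> int p dvd c \<Longrightarrow>
    cone_fibre_card p ((c * x0) mod int p) ((c * x1) mod int p) ((c * x2) mod int p) =
    cone_fibre_card p x0 x1 x2"
  by (simp add: cone_fibre_card_def num_sqrts_diff_squares_mult)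

lemma sum_cone_fibre_card_x0_nonzero:
  "(\<Sum>x0\<in>Fp p - {0}. \<Sum>x1\<in>Fp p. \<Sum>x2\<in>Fp p. cone_fibre_card p x0 x1 x2) =
    (p - 1) * (\<Sum>a\<in>Fp p. \<Sum>b\<in>Fp p. cone_fibre_card p 1 a b)"
proof -
  have "(\<Sum>x1\<in>Fp p. \<Sum>x2\<in>Fp p. cone_fibre_card p x0 x1 x2) =
      (\<Sum>a\<in>Fp p. \<Sum>b\<in>Fp p. cone_fibre_card p 1 a b)" if x0: "x0 \<in> Fp p - {0}" for x0
  proof -
    have c: "\<not> int p dvd x0"
      using Fp_nonzero_not_dvd[OF x0] .
    have "(\<Sum>x1\<in>Fp p. \<Sum>x2\<in>Fp p. cone_fibre_card p x0 x1 x2) =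
        (\<Sum>a\<in>Fp p. \<Sum>x2\<in>Fp p. cone_fibre_card p x0 ((x0 * a) mod int p) x2)"
      by (rule sum_Fp_mult_reindex[OF c])
    also have "\<dots> = (\<Sum>a\<in>Fp p. \<Sum>b\<in>Fp p.
        cone_fibre_card p x0 ((x0 * a) mod int p) ((x0 * b) mod int p))"
      by (rule sum.cong[OF refl], rule sum_Fp_mult_reindex[OF c])
    also have "\<dots> = (\<Sum>a\<in>Fp p. \<Sum>b\<in>Fp p.
        cone_fibre_card p ((x0 * 1) mod int p) ((x0 * a) mod int p) ((x0 * b) mod int p))"
      using x0 by simp
    finally show ?thesis
      by (simp only: cone_fibre_card_mult[OF c])
  qed
  then show ?thesis
    by (simp add: card_Fp_nonzero)
qed

lemma sum_cone_fibre_card_x0_zero_x1_nonzero: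
  "(\<Sum>x1\<in>Fp p - {0}. \<Sum>x2\<in>Fp p. cone_fibre_card p 0 x1 x2) =
    (p - 1) * (\<Sum>b\<in>Fp p. cone_fibre_card p 0 1 b)"
proof -
  have "(\<Sum>x2\<in>Fp p. cone_fibre_card p 0 x1 x2) = (\<Sum>b\<in>Fp p. cone_fibre_card p 0 1 b)"
    if x1: "x1 \<in> Fp p - {0}" for x1
  proof -
    have c: "\<not> int p dvd x1"
      using Fp_nonzero_not_dvd[OF x1] .
    have "(\<Sum>x2\<in>Fp p. cone_fibre_card p 0 x1 x2) =
        (\<Sum>b\<in>Fp p. cone_fibre_card p 0 x1 ((x1 * b) mod int p))"
      by (rule sum_Fp_mult_reindex[OF c])
    also have "\<dots> =
        (\<Sum>b\<in>Fp p. cone_fibre_card p ((x1 * 0) mod int p) ((x1 * 1) mod int p) ((x1 * b) mod int p))"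
      using x1 by simp
    finally show ?thesis
      by (simp only: cone_fibre_card_mult[OF c])
  qed
  then show ?thesis
    by (simp add: card_Fp_nonzero)
qed

end

context odd_prime_field
begin

lemma card_X_points:
  "card (X_points p) = 1 + 4 * (p - 1) +
    (\<Sum>x\<in>Fp p - {0}. \<Sum>y\<in>Fp p - {0}. num_sqrts p ((x^2 * y^2 + 1) * (x^2 + y^2)))"
proof -
  let ?f = "\<lambda>x y. num_sqrts p ((x^2 * y^2 + 1) * (x^2 + y^2))"
  have "X_points p = (SIGMA x:Fp p. SIGMA y:Fp p. sqrts p ((x^2 * y^2 + 1) * (x^2 + y^2)))"
    by (auto simp: X_points_def sqrts_def)
  then have "card (X_points p) = (\<Sum>x\<in>Fp p. \<Sum>y\<in>Fp p. ?f x y)"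
    by (simp add: card_SigmaI finite_SigmaI num_sqrts_def)
  also have "\<dots> = (\<Sum>y\<in>Fp p. ?f 0 y) + (\<Sum>x\<in>Fp p - {0}. \<Sum>y\<in>Fp p. ?f x y)"
    by (rule sum_Fp_remove_zero)
  also have "\<dots> = ?f 0 0 + (\<Sum>y\<in>Fp p - {0}. ?f 0 y) +
      (\<Sum>x\<in>Fp p - {0}. ?f x 0 + (\<Sum>y\<in>Fp p - {0}. ?f x y))"
    by (simp only: sum_Fp_remove_zero)
  also have "?f 0 0 = 1"
    by (simp add: num_sqrts_zero)
  also have "(\<Sum>y\<in>Fp p - {0}. ?f 0 y) = 2 * (p - 1)"
    by (simp add: num_sqrts_square_Fp_nonzero card_Fp_nonzero)
  also have "(\<Sum>x\<in>Fp p - {0}. ?f x 0 + (\<Sum>y\<in>Fp p - {0}. ?f x y)) =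
      (\<Sum>x\<in>Fp p - {0}. 2 + (\<Sum>y\<in>Fp p - {0}. ?f x y))"
    by (intro sum.cong refl) (simp add: num_sqrts_square_Fp_nonzero)
  also have "\<dots> = 2 * (p - 1) + (\<Sum>x\<in>Fp p - {0}. \<Sum>y\<in>Fp p - {0}. ?f x y)"
    unfolding sum.distrib by (simp add: card_Fp_nonzero)
  finally show ?thesis
    by simp
qed

end

section \<open>The circle a^2 + d^2 = 1\<close>

definition circle :: "nat \<Rightarrow> (int \<times> int) set" where
  "circle p = {(a, d). a \<in> Fp p \<and> d \<in> Fp p \<and> [a^2 + d^2 = 1] (mod int p)}"

context prime_field
begin

lemma circle_eq_Sigma: "circle p = (SIGMA a:Fp p. sqrts p (1 - a^2))"
proof -
  have "[d^2 = 1 - a^2] (mod int p) \<longleftrightarrow> [a^2 + d^2 = 1] (mod int p)" for a d :: int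
    by (simp add: cong_iff_dvd_diff algebra_simps)
  then show ?thesis
    by (auto simp: circle_def sqrts_def)
qed

lemma sum_circle: "(\<Sum>(a, d)\<in>circle p. f a) = (\<Sum>a\<in>Fp p. num_sqrts p (1 - a^2) * f a)"
proof -
  have "(\<Sum>(a, d)\<in>circle p. f a) = (\<Sum>a\<in>Fp p. \<Sum>d\<in>sqrts p (1 - a^2). f a)"
    unfolding circle_eq_Sigma by (rule sum.Sigma [symmetric]) simp_all
  then show ?thesis
    by (simp add: num_sqrts_def)
qed

lemma card_circle_eq_sum: "card (circle p) = (\<Sum>a\<in>Fp p. num_sqrts p (1 - a^2))"
  using sum_circle[of "\<lambda>_. 1"] by simp

end

context prime_field_sqrt_minus_one
begin

lemma circle_norm:
  assumes "(a, d) \<in> circle p"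
  shows "[(a + i * d) * (a - i * d) = 1] (mod int p)"
proof -
  have "(a + i * d) * (a - i * d) = a^2 - i^2 * d^2"
    by (simp add: power2_eq_square algebra_simps)
  also have "[\<dots> = a^2 - (-1) * d^2] (mod int p)"
    using i_square by (intro cong_diff cong_mult cong_refl)
  also have "a^2 - (-1) * d^2 = a^2 + d^2"
    by simp
  also have "[\<dots> = 1] (mod int p)"
    using assms by (simp add: circle_def)
  finally show ?thesis .
qed

lemma circle_param_not_dvd:
  assumes "(a, d) \<in> circle p"
  shows "\<not> int p dvd a + i * d"
proof
  assume "int p dvd a + i * d"
  then have "[(a + i * d) * (a - i * d) = 0] (mod int p)"
    by (simp add: cong_0_iff)
  with circle_norm[OF assms] have "[1 = 0] (mod int p)"
    by (metis cong_sym cong_trans)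
  then show False
    using p_gt_1 by (simp add: cong_0_iff)
qed

lemma circle_param_first_coord:
  assumes "(a, d) \<in> circle p"
  shows "[2 * (a + i * d) * a = (a + i * d)^2 + 1] (mod int p)"
proof -
  have "2 * (a + i * d) * a = (a + i * d)^2 + (a + i * d) * (a - i * d)"
    by (simp add: power2_eq_square algebra_simps)
  also have "[\<dots> = (a + i * d)^2 + 1] (mod int p)"
    using circle_norm[OF assms] by (intro cong_add cong_refl)
  finally show ?thesis .
qed

lemma circle_param_inj: "inj_on (\<lambda>(a, d). (a + i * d) mod int p) (circle p)"
proof (intro inj_onI, clarify)
  fix a d b e
  assume ad: "(a, d) \<in> circle p" and be: "(b, e) \<in> circle p"
    and "(a + i * d) mod int p = (b + i * e) mod int p"
  then have st: "[a + i * d = b + i * e] (mod int p)"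
    by (simp add: cong_def)
  have "[2 * (a + i * d) * b = 2 * (b + i * e) * b] (mod int p)"
    using st by (intro cong_mult cong_refl)
  also have "[2 * (b + i * e) * b = (b + i * e)^2 + 1] (mod int p)"
    using circle_param_first_coord[OF be] .
  also have "[(b + i * e)^2 + 1 = (a + i * d)^2 + 1] (mod int p)"
    by (rule cong_add[OF cong_pow[OF cong_sym[OF st]] cong_refl])
  also have "[(a + i * d)^2 + 1 = 2 * (a + i * d) * a] (mod int p)"
    using circle_param_first_coord[OF ad] by (rule cong_sym)
  finally have "[b = a] (mod int p)"
    using cong_mult_cancel_left not_dvd_mult[OF two_not_dvd circle_param_not_dvd[OF ad]]
    by (metis mult.assoc)
  with ad be have "a = b"
    by (intro Fp_cong_imp_eq) (auto simp: circle_def cong_sym_eq)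
  with st have "[i * d = i * e] (mod int p)"
    by (simp add: cong_add_lcancel)
  then have "[d = e] (mod int p)"
    by (rule cong_mult_cancel_left[OF i_not_dvd])
  with ad be have "d = e"
    by (intro Fp_cong_imp_eq) (auto simp: circle_def)
  with \<open>a = b\<close> show "a = b \<and> d = e"
    by simp
qed

lemma circle_param_surj:
  assumes s: "s \<in> Fp p - {0}"
  shows "s \<in> (\<lambda>(a, d). (a + i * d) mod int p) ` circle p"
proof -
  obtain s' where s': "[s * s' = 1] (mod int p)"
    using inverse_mod_exists[OF Fp_nonzero_not_dvd[OF s]] by blast
  obtain h where h: "[2 * h = 1] (mod int p)"
    using inverse_mod_exists[OF two_not_dvd] by blast
  define a where "a = ((s + s') * h) mod int p"
  define d where "d = (i * (s' - s) * h) mod int p"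
  have "[a^2 + d^2 = ((s + s') * h)^2 + (i * (s' - s) * h)^2] (mod int p)"
    unfolding a_def d_def by (intro cong_add cong_pow) simp_all
  also have "((s + s') * h)^2 + (i * (s' - s) * h)^2 = h^2 * ((s + s')^2 + i^2 * (s' - s)^2)"
    by (simp add: power2_eq_square algebra_simps)
  also have "[h^2 * ((s + s')^2 + i^2 * (s' - s)^2) = h^2 * ((s + s')^2 + (-1) * (s' - s)^2)] (mod int p)"
    using i_square by (intro cong_mult cong_add cong_refl)
  also have "h^2 * ((s + s')^2 + (-1) * (s' - s)^2) = (2 * h)^2 * (s * s')"
    by (simp add: power2_eq_square algebra_simps)
  also have "[(2 * h)^2 * (s * s') = 1^2 * 1] (mod int p)"
    using h s' by (intro cong_mult cong_pow)
  finally have "(a, d) \<in> circle p"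
    by (simp add: circle_def a_def d_def)
  have "[a + i * d = (s + s') * h + i * (i * (s' - s) * h)] (mod int p)"
    unfolding a_def d_def by (intro cong_add cong_mult cong_refl) simp_all
  also have "(s + s') * h + i * (i * (s' - s) * h) = (s + s') * h + i^2 * ((s' - s) * h)"
    by (simp add: power2_eq_square algebra_simps)
  also have "[(s + s') * h + i^2 * ((s' - s) * h) = (s + s') * h + (-1) * ((s' - s) * h)] (mod int p)"
    using i_square by (intro cong_add cong_mult cong_refl)
  also have "(s + s') * h + (-1) * ((s' - s) * h) = s * (2 * h)"
    by (simp add: algebra_simps)
  also have "[s * (2 * h) = s * 1] (mod int p)"
    using h by (intro cong_mult cong_refl)
  finally have "(a + i * d) mod int p = s"
    using s by (simp add: cong_def)
  with \<open>(a, d) \<in> circle p\<close> show ?thesis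
    by (auto intro: rev_image_eqI)
qed

lemma bij_betw_circle_param:
  "bij_betw (\<lambda>(a, d). (a + i * d) mod int p) (circle p) (Fp p - {0})"
proof -
  have "(\<lambda>(a, d). (a + i * d) mod int p) ` circle p \<subseteq> Fp p - {0}"
    using circle_param_not_dvd by (auto simp: Fp_nonzero_iff)
  then show ?thesis
    using circle_param_inj circle_param_surj by (auto simp: bij_betw_def)
qed

lemma card_circle: "card (circle p) = p - 1"
  using bij_betw_same_card[OF bij_betw_circle_param] by (simp add: card_Fp_nonzero)

text \<open>Clearing the denominators of a = (s + 1/s)/2 and b = (t + 1/t)/2 gives
  (2 s t)^2 (a^2 - b^2) = (s^2 - t^2)(s^2 t^2 - 1).\<close>
lemma num_sqrts_diff_squares_circle:
  assumes ad: "(a, d) \<in> circle p" and be: "(b, e) \<in> circle p"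
  defines "s \<equiv> (a + i * d) mod int p" and "t \<equiv> (b + i * e) mod int p"
  shows "num_sqrts p (a^2 - b^2) = num_sqrts p ((s^2 - t^2) * (s^2 * t^2 - 1))"
proof -
  define s0 where "s0 = a + i * d"
  define t0 where "t0 = b + i * e"
  have "(2 * s0 * t0)^2 * (a^2 - b^2) = t0^2 * (2 * s0 * a)^2 - s0^2 * (2 * t0 * b)^2"
    by (simp add: power2_eq_square algebra_simps)
  also have "[t0^2 * (2 * s0 * a)^2 - s0^2 * (2 * t0 * b)^2 =
      t0^2 * (s0^2 + 1)^2 - s0^2 * (t0^2 + 1)^2] (mod int p)"
    unfolding s0_def t0_def
    using circle_param_first_coord[OF ad] circle_param_first_coord[OF be]
    by (intro cong_diff cong_mult cong_pow cong_refl)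
  also have "t0^2 * (s0^2 + 1)^2 - s0^2 * (t0^2 + 1)^2 = (s0^2 - t0^2) * (s0^2 * t0^2 - 1)"
    by (simp add: power2_eq_square algebra_simps)
  also have "[(s0^2 - t0^2) * (s0^2 * t0^2 - 1) = (s^2 - t^2) * (s^2 * t^2 - 1)] (mod int p)"
    unfolding s_def t_def s0_def t0_def by (intro cong_diff cong_mult cong_pow cong_refl) simp_all
  finally have "num_sqrts p ((2 * s0 * t0)^2 * (a^2 - b^2)) = num_sqrts p ((s^2 - t^2) * (s^2 * t^2 - 1))"
    by (rule num_sqrts_cong)
  moreover have "\<not> int p dvd 2 * s0 * t0"
    unfolding s0_def t0_def
    using two_not_dvd circle_param_not_dvd[OF ad] circle_param_not_dvd[OF be] by (intro not_dvd_mult)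
  ultimately show ?thesis
    using num_sqrts_mult_square by metis
qed

end

section \<open>Summing the slices\<close>

context prime_field_sqrt_minus_one
begin

lemma num_sqrts_rotate:
  "num_sqrts p ((s^2 - ((i * t) mod int p)^2) * (s^2 * ((i * t) mod int p)^2 - 1)) =
    num_sqrts p ((s^2 * t^2 + 1) * (s^2 + t^2))"
proof -
  have "[((i * t) mod int p)^2 = i^2 * t^2] (mod int p)"
    by (simp add: cong_def power_mod power_mult_distrib)
  also have "[i^2 * t^2 = - (t^2)] (mod int p)"
    using i_square cong_mult[OF _ cong_refl, of "i^2" "-1" _ "t^2"] by simp
  finally have it: "[((i * t) mod int p)^2 = - (t^2)] (mod int p)" .
  have "[(s^2 - ((i * t) mod int p)^2) * (s^2 * ((i * t) mod int p)^2 - 1) =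
      (s^2 - - (t^2)) * (s^2 * - (t^2) - 1)] (mod int p)"
    using it by (intro cong_mult cong_diff cong_refl)
  also have "(s^2 - - (t^2)) * (s^2 * - (t^2) - 1) = - ((s^2 * t^2 + 1) * (s^2 + t^2))"
    by (simp add: algebra_simps)
  finally show ?thesis
    using num_sqrts_cong num_sqrts_uminus by metis
qed

lemma sum_cone_fibre_card_0_0: "(\<Sum>x\<in>Fp p. cone_fibre_card p 0 0 x) = 1 + 4 * (p - 1)"
proof -
  have "(\<Sum>x\<in>Fp p. cone_fibre_card p 0 0 x) =
      cone_fibre_card p 0 0 0 + (\<Sum>x\<in>Fp p - {0}. cone_fibre_card p 0 0 x)"
    by (rule sum_Fp_remove_zero)
  also have "(\<Sum>x\<in>Fp p - {0}. cone_fibre_card p 0 0 x) = (\<Sum>x\<in>Fp p - {0}. 4)"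
    by (intro sum.cong refl)
      (simp add: cone_fibre_card_def num_sqrts_zero num_sqrts_uminus_square_Fp_nonzero)
  finally show ?thesis
    by (simp add: cone_fibre_card_def num_sqrts_zero card_Fp_nonzero)
qed

lemma sum_cone_fibre_card_0_1: "(\<Sum>b\<in>Fp p. cone_fibre_card p 0 1 b) = 4 * (p - 2)"
proof -
  have one: "num_sqrts p 1 = 2" and minus_one: "num_sqrts p (-1) = 2"
    using num_sqrts_square_Fp_nonzero[OF one_in_Fp_nonzero] num_sqrts_uminus by simp_all
  have "(\<Sum>b\<in>Fp p. cone_fibre_card p 0 1 b) =
      cone_fibre_card p 0 1 0 + (\<Sum>b\<in>Fp p - {0}. cone_fibre_card p 0 1 b)"
    by (rule sum_Fp_remove_zero)
  also have "(\<Sum>b\<in>Fp p - {0}. cone_fibre_card p 0 1 b) =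
      4 * (\<Sum>b\<in>Fp p - {0}. num_sqrts p (1 - b^2))"
    unfolding sum_distrib_left
    by (intro sum.cong refl) (simp add: cone_fibre_card_def minus_one num_sqrts_uminus_square_Fp_nonzero)
  also have "(\<Sum>b\<in>Fp p - {0}. num_sqrts p (1 - b^2)) = p - 3"
    using card_circle_eq_sum card_circle sum_Fp_remove_zero[of "\<lambda>b. num_sqrts p (1 - b^2)"]
    by (simp add: one)
  finally show ?thesis
    using p_ge_3 by (simp add: cone_fibre_card_def one minus_one num_sqrts_zero)
qed

lemma sum_cone_fibre_card_1:
  "(\<Sum>a\<in>Fp p. \<Sum>b\<in>Fp p. cone_fibre_card p 1 a b) =
    (\<Sum>s\<in>Fp p - {0}. \<Sum>t\<in>Fp p - {0}. num_sqrts p ((s^2 * t^2 + 1) * (s^2 + t^2)))"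
proof -
  let ?\<phi> = "\<lambda>(a, d). (a + i * d) mod int p"
  let ?H = "\<lambda>s t. num_sqrts p ((s^2 - t^2) * (s^2 * t^2 - 1))"
  have "(\<Sum>a\<in>Fp p. \<Sum>b\<in>Fp p. cone_fibre_card p 1 a b) =
      (\<Sum>a\<in>Fp p. num_sqrts p (1 - a^2) * (\<Sum>b\<in>Fp p. num_sqrts p (1 - b^2) * num_sqrts p (a^2 - b^2)))"
    by (simp add: cone_fibre_card_def sum_distrib_left mult_ac)
  also have "\<dots> = (\<Sum>(a, d)\<in>circle p. \<Sum>(b, e)\<in>circle p. num_sqrts p (a^2 - b^2))"
    by (simp add: sum_circle)
  also have "\<dots> = (\<Sum>u\<in>circle p. \<Sum>v\<in>circle p. ?H (?\<phi> u) (?\<phi> v))"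
    by (intro sum.cong refl) (auto intro!: sum.cong simp: num_sqrts_diff_squares_circle)
  also have "\<dots> = (\<Sum>u\<in>circle p. \<Sum>t\<in>Fp p - {0}. ?H (?\<phi> u) t)"
    by (rule sum.cong[OF refl], rule sum.reindex_bij_betw[OF bij_betw_circle_param])
  also have "\<dots> = (\<Sum>s\<in>Fp p - {0}. \<Sum>t\<in>Fp p - {0}. ?H s t)"
    by (rule sum.reindex_bij_betw[OF bij_betw_circle_param,
          where g = "\<lambda>s. \<Sum>t\<in>Fp p - {0}. ?H s t"])
  also have "\<dots> = (\<Sum>s\<in>Fp p - {0}. \<Sum>t\<in>Fp p - {0}. ?H s ((i * t) mod int p))"
    by (rule sum.cong[OF refl], rule sum_Fp_nonzero_mult_reindex[OF i_not_dvd])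
  also have "\<dots> = (\<Sum>s\<in>Fp p - {0}. \<Sum>t\<in>Fp p - {0}. num_sqrts p ((s^2 * t^2 + 1) * (s^2 + t^2)))"
    by (simp only: num_sqrts_rotate)
  finally show ?thesis .
qed

lemma sum_cone_fibre_card:
  "(\<Sum>x0\<in>Fp p. \<Sum>x1\<in>Fp p. \<Sum>x2\<in>Fp p. cone_fibre_card p x0 x1 x2) =
    1 + 4 * (p - 1) + (p - 1) * (4 * (p - 2)) +
    (p - 1) * (\<Sum>s\<in>Fp p - {0}. \<Sum>t\<in>Fp p - {0}. num_sqrts p ((s^2 * t^2 + 1) * (s^2 + t^2)))"
proof -
  have "(\<Sum>x0\<in>Fp p. \<Sum>x1\<in>Fp p. \<Sum>x2\<in>Fp p. cone_fibre_card p x0 x1 x2) =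
      (\<Sum>x2\<in>Fp p. cone_fibre_card p 0 0 x2) +
      (\<Sum>x1\<in>Fp p - {0}. \<Sum>x2\<in>Fp p. cone_fibre_card p 0 x1 x2) +
      (\<Sum>x0\<in>Fp p - {0}. \<Sum>x1\<in>Fp p. \<Sum>x2\<in>Fp p. cone_fibre_card p x0 x1 x2)"
    by (simp only:
        sum_Fp_remove_zero[of "\<lambda>x0. \<Sum>x1\<in>Fp p. \<Sum>x2\<in>Fp p. cone_fibre_card p x0 x1 x2"]
        sum_Fp_remove_zero[of "\<lambda>x1. \<Sum>x2\<in>Fp p. cone_fibre_card p 0 x1 x2"])
  then show ?thesis
    by (simp only: sum_cone_fibre_card_0_0 sum_cone_fibre_card_x0_zero_x1_nonzero
        sum_cone_fibre_card_0_1 sum_cone_fibre_card_x0_nonzero sum_cone_fibre_card_1)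
qed

lemma card_X_points_eq_card_S_points_plus_1: "card (X_points p) = card (S_points p) + 1"
proof -
  define G where "G = (\<Sum>s\<in>Fp p - {0}. \<Sum>t\<in>Fp p - {0}. num_sqrts p ((s^2 * t^2 + 1) * (s^2 + t^2)))"
  have "(p - 1) * card (S_points p) + 1 = 1 + 4 * (p - 1) + (p - 1) * (4 * (p - 2)) + (p - 1) * G"
    unfolding card_S_points card_S_affine_cone sum_cone_fibre_card G_def ..
  moreover have "4 * (p - 1) + (p - 1) * (4 * (p - 2)) = (p - 1) * (4 * (p - 1))"
    using p_gt_1 by (cases p) (simp_all add: algebra_simps)
  ultimately have "(p - 1) * card (S_points p) = (p - 1) * (4 * (p - 1) + G)"
    by (simp add: algebra_simps)
  then have "card (S_points p) = 4 * (p - 1) + G"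
    using p_gt_1 by simp
  with card_X_points show ?thesis
    by (simp add: G_def)
qed

end

theorem lemma4p4:
  fixes p :: nat
  assumes "prime p" and "p mod 4 = 1"
  shows "int (card (S_points p)) = int (card (X_points p)) - 1"
proof -
  obtain i where "[i^2 = -1] (mod int p)"
    using sqrt_minus_one_exists[OF assms] by blast
  moreover have "odd p"
    using assms(2) by presburger
  ultimately interpret prime_field_sqrt_minus_one p i
    using assms(1) by unfold_locales
  show ?thesis
    using card_X_points_eq_card_S_points_plus_1 by linarith
qed

end
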